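(* Let $N\ge 1$, let $\gamma_1,\dots,\gamma_N>0$, let $G$ be an $N\times N$ complex Hermitian matrix and $F$ an $N\times N$ complex symmetric matrix. Define $\Gamma=\mathrm{diag}(\gamma_1,\dots,\gamma_N,\gamma_1,\dots,\gamma_N)$, $$\mathcal{M}=\begin{pmatrix}\mathrm{Im}[G+F] & \mathrm{Re}[G-F]\\ -\mathrm{Re}[G+F] & -\mathrm{Im}[G+F]^{\mathrm T}\end{pmatrix},\qquad \mathbb{J}=\begin{pmatrix}0 & I\\ -I & 0\end{pmatrix},$$ with $I$ the $N\times N$ identity, and assume $\mathrm{i}\omega\mathbb{I}+\Gamma-\mathcal{M}$ is invertible for all $\omega\in\mathbb{R}$ ($\mathbb{I}$ the $2N\times2N$ identity). Let $S(\omega)=\sqrt{2\Gamma}\,(\mathrm{i}\omega\mathbb{I}+\Gamma-\mathcal{M})^{-1}\sqrt{2\Gamma}-\mathbb{I}$. Then $\mathcal{M}$ is a Hamiltonian matrix, i.e. $(\mathbb{J}\mathcal{M})^{\mathrm T}=\mathbb{J}\mathcal{M}$, $\Gamma$ is skew-Hamiltonian, i.e. $(\mathbb{J}\Gamma)^{\mathrm T}=-\mathbb{J}\Gamma$, and for every $\omega\in\mathbb{R}$ the matrix $S(\omega)$ is conjugate-symplectic: $S(\omega)\,\mathbb{J}\,S(\omega)^\dagger=\mathbb{J}$.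
   Context: $\mathrm{Re}$, $\mathrm{Im}$ are entrywise; ${}^{\mathrm T}$ is transpose and ${}^\dagger$ is conjugate transpose; $\sqrt{2\Gamma}$ is the entrywise square root of the diagonal matrix $2\Gamma$. *)

theory Defs
  imports "HOL-Analysis.Analysis"
begin

text \<open>Index type for 2N x 2N matrices: 'n + 'n, where Inl i is the i-th index of the first
block (1..N) and Inr i the i-th index of the second block (N+1..2N).\<close>

definition block_mat ::
  "'a^'n::finite^'n \<Rightarrow> 'a^'n^'n \<Rightarrow> 'a^'n^'n \<Rightarrow> 'a^'n^'n \<Rightarrow> 'a^('n+'n)^('n+'n)" where
  "block_mat A B C D = (\<chi> i j. (case i of
      Inl a \<Rightarrow> (case j of Inl b \<Rightarrow> A$a$b | Inr b \<Rightarrow> B$a$b)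
    | Inr a \<Rightarrow> (case j of Inl b \<Rightarrow> C$a$b | Inr b \<Rightarrow> D$a$b)))"

definition Re_mat :: "complex^'n^'m \<Rightarrow> real^'n^'m" where
  "Re_mat A = (\<chi> i j. Re (A$i$j))"

definition Im_mat :: "complex^'n^'m \<Rightarrow> real^'n^'m" where
  "Im_mat A = (\<chi> i j. Im (A$i$j))"

definition cmat :: "real^'n^'m \<Rightarrow> complex^'n^'m" where
  "cmat A = (\<chi> i j. complex_of_real (A$i$j))"

definition conj_transpose :: "complex^'n^'m \<Rightarrow> complex^'m^'n" where
  "conj_transpose A = (\<chi> i j. cnj (A$j$i))"

definition hermitian_mat :: "complex^'n^'n \<Rightarrow> bool" where
  "hermitian_mat A \<longleftrightarrow> conj_transpose A = A"

definition idx :: "'n::finite + 'n \<Rightarrow> 'n" where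
  "idx k = (case k of Inl a \<Rightarrow> a | Inr a \<Rightarrow> a)"

definition Gamma_mat :: "('n::finite \<Rightarrow> real) \<Rightarrow> real^('n+'n)^('n+'n)" where
  "Gamma_mat \<gamma> = (\<chi> i j. if i = j then \<gamma> (idx i) else 0)"

definition sqrt2Gamma_mat :: "('n::finite \<Rightarrow> real) \<Rightarrow> real^('n+'n)^('n+'n)" where
  "sqrt2Gamma_mat \<gamma> = (\<chi> i j. sqrt (2 * (Gamma_mat \<gamma>)$i$j))"

definition M_mat :: "complex^'n::finite^'n \<Rightarrow> complex^'n^'n \<Rightarrow> real^('n+'n)^('n+'n)" where
  "M_mat G F = block_mat (Im_mat (G + F)) (Re_mat (G - F))
                         (- Re_mat (G + F)) (- transpose (Im_mat (G + F)))"

definition J_mat :: "real^('n::finite+'n)^('n+'n)" where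
  "J_mat = block_mat 0 (mat 1) (- mat 1) 0"

definition S_mat :: "('n::finite \<Rightarrow> real) \<Rightarrow> complex^'n^'n \<Rightarrow> complex^'n^'n \<Rightarrow> real \<Rightarrow> complex^('n+'n)^('n+'n)" where
  "S_mat \<gamma> G F \<omega> =
     cmat (sqrt2Gamma_mat \<gamma>) **
       matrix_inv (mat (\<i> * complex_of_real \<omega>) + cmat (Gamma_mat \<gamma>) - cmat (M_mat G F)) **
     cmat (sqrt2Gamma_mat \<gamma>) - mat 1"

end

theory Submission
  imports Defs
begin

text \<open>Since G is Hermitian and F symmetric, the blocks Re(G + F) and Re(G - F) are symmetric,
which is exactly the symmetry of J M; and \<Gamma> and R = sqrt(2\<Gamma>) are diagonal with the same
entry on the indices Inl a and Inr a, so they commute with J. For K = i\<omega> + \<Gamma> - M this gives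
K J + J K^\<dagger> = 2\<Gamma> J = R R J, the imaginary shift cancelling against its conjugate.
From this identity alone, with L = K^-1, ring algebra yields
(R L R - 1) J (R L^\<dagger> R - 1) = J.\<close>

lemma matrix_add_rdistrib: "(A + B) ** C = A ** C + B ** (C::'a::semiring_1^'n^'m)"
  by (simp add: matrix_matrix_mult_def vec_eq_iff sum.distrib distrib_right)

lemma matrix_diff_ldistrib: "A ** (B - C) = A ** B - A ** (C::'a::ring_1^'n^'m)"
  by (simp add: matrix_matrix_mult_def vec_eq_iff sum_subtractf right_diff_distrib)

lemma matrix_diff_rdistrib: "(A - B) ** C = A ** C - B ** (C::'a::ring_1^'n^'m)"
  by (simp add: matrix_matrix_mult_def vec_eq_iff sum_subtractf left_diff_distrib)

lemma matrix_mul_lneg: "(- A) ** B = - (A ** (B::'a::ring_1^'n^'m))"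
  by (simp add: matrix_matrix_mult_def vec_eq_iff sum_negf)

lemma matrix_mul_rneg: "A ** (- B) = - (A ** (B::'a::ring_1^'n^'m))"
  by (simp add: matrix_matrix_mult_def vec_eq_iff sum_negf)

lemma matrix_mul_mat_left: "mat c ** A = (\<chi> i j. c * A$i$j)"
  unfolding matrix_matrix_mult_def mat_def
  by (auto simp: vec_eq_iff if_distrib if_distribR sum.delta cong: if_cong)

lemma matrix_mul_mat_right: "A ** mat c = (\<chi> i j. A$i$j * c)"
  unfolding matrix_matrix_mult_def mat_def
  by (auto simp: vec_eq_iff if_distrib if_distribR sum.delta' cong: if_cong)

lemma transpose_zero [simp]: "transpose 0 = 0"
  by (simp add: transpose_def vec_eq_iff)

lemma transpose_uminus: "transpose (- A) = - transpose A"
  by (simp add: transpose_def vec_eq_iff)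

lemma transpose_diff: "transpose (A - B) = transpose A - transpose B"
  by (simp add: transpose_def vec_eq_iff)

lemma matrix_inv_left: "invertible A \<Longrightarrow> matrix_inv A ** A = mat 1"
  unfolding invertible_def matrix_inv_def by (metis (mono_tags, lifting) someI_ex)

lemma sandwiched_inverse_preserves_form:
  fixes R J K K' L L' :: "'a::ring_1^'m^'m"
  assumes L: "L ** K = mat 1" and L': "K' ** L' = mat 1"
    and RJ: "R ** J = J ** R" and KJ: "K ** J + J ** K' = R ** R ** J"
  shows "(R ** L ** R - mat 1) ** J ** (R ** L' ** R - mat 1) = J"
proof -
  have "L ** (R ** R ** J) ** L' = (L ** K) ** J ** L' + L ** J ** (K' ** L')"
    by (simp add: KJ[symmetric] matrix_add_ldistrib matrix_add_rdistrib matrix_mul_assoc)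
  then have inner: "L ** (R ** R ** J) ** L' = J ** L' + L ** J"
    by (simp add: L L')
  have RJR: "R ** J ** R = R ** R ** J"
    by (metis RJ matrix_mul_assoc)
  have "R ** L ** R ** J ** R ** L' ** R = R ** (L ** (R ** R ** J) ** L') ** R"
    by (simp add: RJR[symmetric] matrix_mul_assoc)
  also have "\<dots> = (R ** J) ** L' ** R + R ** L ** (J ** R)"
    unfolding inner by (simp add: matrix_add_ldistrib matrix_add_rdistrib matrix_mul_assoc)
  also have "\<dots> = J ** R ** L' ** R + R ** L ** R ** J"
    by (metis RJ matrix_mul_assoc)
  finally have "R ** L ** R ** J ** R ** L' ** R = J ** R ** L' ** R + R ** L ** R ** J" .
  then show ?thesis
    by (simp add: matrix_diff_ldistrib matrix_diff_rdistrib matrix_mul_assoc algebra_simps)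
qed

lemma sum_UNIV_Plus: "sum f (UNIV::('a::finite + 'b::finite) set) = sum (f \<circ> Inl) UNIV + sum (f \<circ> Inr) UNIV"
  by (metis UNIV_Plus_UNIV sum.Plus finite)

lemma block_mat_mult:
  fixes A B C D A' B' C' D' :: "'a::semiring_1^'n::finite^'n"
  shows "block_mat A B C D ** block_mat A' B' C' D' =
    block_mat (A ** A' + B ** C') (A ** B' + B ** D') (C ** A' + D ** C') (C ** B' + D ** D')"
  unfolding block_mat_def matrix_matrix_mult_def
  by (auto simp: vec_eq_iff sum_UNIV_Plus sum.distrib split: sum.split)

lemma transpose_block_mat:
  "transpose (block_mat A B C D) = block_mat (transpose A) (transpose C) (transpose B) (transpose D)"
  unfolding block_mat_def transpose_def by (auto simp: vec_eq_iff split: sum.split)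

lemma uminus_block_mat: "- block_mat A B C D = block_mat (- A) (- B) (- C) (- D)"
  unfolding block_mat_def by (auto simp: vec_eq_iff split: sum.split)

lemma mat_one_block_mat: "(mat 1 :: 'a::semiring_1^('n::finite + 'n)^('n + 'n)) = block_mat (mat 1) 0 0 (mat 1)"
  unfolding block_mat_def mat_def by (auto simp: vec_eq_iff split: sum.split)

lemma transpose_J_mat: "transpose J_mat = - J_mat"
  by (simp add: J_mat_def transpose_block_mat uminus_block_mat transpose_uminus)

lemma J_mat_square: "J_mat ** J_mat = - mat 1"
  by (simp add: J_mat_def block_mat_mult mat_one_block_mat uminus_block_mat matrix_mul_lneg)

lemma hamiltonian_commutator_form:
  fixes M :: "real^('n::finite + 'n)^('n + 'n)"
  assumes "transpose (J_mat ** M) = J_mat ** M"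
  shows "M ** J_mat + J_mat ** transpose M = 0"
proof -
  have JM: "J_mat ** M = - (transpose M ** J_mat)"
    using assms by (simp add: matrix_transpose_mul transpose_J_mat matrix_mul_rneg)
  have "- (M ** J_mat) = J_mat ** (J_mat ** M) ** J_mat"
    by (simp add: matrix_mul_assoc J_mat_square matrix_mul_lneg)
  also have "\<dots> = J_mat ** transpose M"
    by (simp add: JM matrix_mul_assoc J_mat_square matrix_mul_lneg matrix_mul_rneg
        flip: matrix_mul_assoc[of _ J_mat J_mat])
  finally show ?thesis
    by (simp add: neg_eq_iff_add_eq_0)
qed

definition diag_mat :: "('n::finite \<Rightarrow> 'a::zero) \<Rightarrow> 'a^'n^'n" where
  "diag_mat d = (\<chi> i j. if i = j then d i else 0)"

lemma matrix_mul_diag_mat_left: "diag_mat d ** A = (\<chi> i j. d i * A$i$j)"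
  unfolding matrix_matrix_mult_def diag_mat_def
  by (auto simp: vec_eq_iff if_distrib if_distribR sum.delta cong: if_cong)

lemma matrix_mul_diag_mat_right: "A ** diag_mat d = (\<chi> i j. A$i$j * d j)"
  unfolding matrix_matrix_mult_def diag_mat_def
  by (auto simp: vec_eq_iff if_distrib if_distribR sum.delta' cong: if_cong)

lemma diag_mat_mult: "diag_mat a ** diag_mat b = diag_mat (\<lambda>i. a i * b i)"
  by (simp add: matrix_mul_diag_mat_left) (simp add: diag_mat_def vec_eq_iff)

lemma transpose_diag_mat: "transpose (diag_mat d) = diag_mat d"
  by (auto simp: transpose_def diag_mat_def vec_eq_iff)

lemma Gamma_mat_eq_diag_mat: "Gamma_mat \<gamma> = diag_mat (\<gamma> \<circ> idx)"
  by (simp add: Gamma_mat_def diag_mat_def o_def)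

lemma sqrt2Gamma_mat_eq_diag_mat: "sqrt2Gamma_mat \<gamma> = diag_mat (\<lambda>k. sqrt (2 * \<gamma> (idx k)))"
  by (simp add: sqrt2Gamma_mat_def Gamma_mat_def diag_mat_def if_distrib cong: if_cong)

lemma sqrt2Gamma_mat_square:
  assumes "\<And>i. \<gamma> i \<ge> 0"
  shows "sqrt2Gamma_mat \<gamma> ** sqrt2Gamma_mat \<gamma> = Gamma_mat \<gamma> + Gamma_mat \<gamma>"
  using assms by (simp add: sqrt2Gamma_mat_eq_diag_mat Gamma_mat_eq_diag_mat diag_mat_mult)
    (simp add: diag_mat_def vec_eq_iff)

lemma J_mat_commute_doubled_diag_mat: "J_mat ** diag_mat (d \<circ> idx) = diag_mat (d \<circ> idx) ** J_mat"
  by (auto simp: matrix_mul_diag_mat_left matrix_mul_diag_mat_right vec_eq_iff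
      J_mat_def block_mat_def mat_def idx_def split: sum.split)

lemma Gamma_mat_commute_J_mat: "J_mat ** Gamma_mat \<gamma> = Gamma_mat \<gamma> ** J_mat"
  by (simp add: Gamma_mat_eq_diag_mat J_mat_commute_doubled_diag_mat)

lemma sqrt2Gamma_mat_commute_J_mat: "J_mat ** sqrt2Gamma_mat \<gamma> = sqrt2Gamma_mat \<gamma> ** J_mat"
  using J_mat_commute_doubled_diag_mat[of "\<lambda>a. sqrt (2 * \<gamma> a)"]
  by (simp add: sqrt2Gamma_mat_eq_diag_mat o_def)

lemma J_mat_Gamma_mat_skew: "transpose (J_mat ** Gamma_mat \<gamma>) = - (J_mat ** Gamma_mat \<gamma>)"
  by (simp add: matrix_transpose_mul transpose_J_mat Gamma_mat_eq_diag_mat transpose_diag_mat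
      matrix_mul_rneg matrix_mul_lneg J_mat_commute_doubled_diag_mat)

lemma transpose_Re_mat_hermitian_pm_symmetric:
  assumes "hermitian_mat G" and "transpose F = F"
  shows "transpose (Re_mat (G + F)) = Re_mat (G + F)" "transpose (Re_mat (G - F)) = Re_mat (G - F)"
proof -
  have G: "cnj (G$j$i) = G$i$j" and F: "F$j$i = F$i$j" for i j
    using assms by (simp_all add: hermitian_mat_def conj_transpose_def transpose_def vec_eq_iff)
  have "Re (G$j$i) = Re (G$i$j)" for i j
    using arg_cong[OF G[of i j], of Re] by simp
  then show "transpose (Re_mat (G + F)) = Re_mat (G + F)" "transpose (Re_mat (G - F)) = Re_mat (G - F)"
    using F by (simp_all add: transpose_def Re_mat_def vec_eq_iff)
qed

lemma J_mat_M_mat_symmetric: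
  assumes "hermitian_mat G" and "transpose F = F"
  shows "transpose (J_mat ** M_mat G F) = J_mat ** M_mat G F"
  using transpose_Re_mat_hermitian_pm_symmetric[OF assms]
  by (simp add: J_mat_def M_mat_def block_mat_mult transpose_block_mat matrix_mul_lneg transpose_uminus)

lemma Gamma_minus_M_mat_J_mat_form:
  assumes "\<And>i. \<gamma> i \<ge> 0" and "hermitian_mat G" and "transpose F = F"
  shows "(Gamma_mat \<gamma> - M_mat G F) ** J_mat + J_mat ** transpose (Gamma_mat \<gamma> - M_mat G F)
       = sqrt2Gamma_mat \<gamma> ** sqrt2Gamma_mat \<gamma> ** J_mat"
proof -
  have Gamma_sym: "transpose (Gamma_mat \<gamma>) = Gamma_mat \<gamma>"
    by (simp add: Gamma_mat_eq_diag_mat transpose_diag_mat)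
  have "(Gamma_mat \<gamma> - M_mat G F) ** J_mat + J_mat ** transpose (Gamma_mat \<gamma> - M_mat G F)
      = (Gamma_mat \<gamma> ** J_mat + J_mat ** Gamma_mat \<gamma>)
        - (M_mat G F ** J_mat + J_mat ** transpose (M_mat G F))"
    by (simp add: Gamma_sym transpose_diff matrix_diff_ldistrib matrix_diff_rdistrib algebra_simps)
  also have "\<dots> = (Gamma_mat \<gamma> + Gamma_mat \<gamma>) ** J_mat"
    by (simp only: hamiltonian_commutator_form[OF J_mat_M_mat_symmetric[OF assms(2,3)]]
        Gamma_mat_commute_J_mat matrix_add_rdistrib diff_zero)
  finally show ?thesis
    by (simp add: sqrt2Gamma_mat_square[OF assms(1)])
qed

lemma cmat_mult: "cmat (A ** B) = cmat A ** cmat B"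
  by (simp add: cmat_def matrix_matrix_mult_def vec_eq_iff)

lemma cmat_add: "cmat (A + B) = cmat A + cmat B"
  by (simp add: cmat_def vec_eq_iff)

lemma cmat_diff: "cmat (A - B) = cmat A - cmat B"
  by (simp add: cmat_def vec_eq_iff)

lemma conj_transpose_mult: "conj_transpose (A ** B) = conj_transpose B ** conj_transpose A"
  by (simp add: conj_transpose_def matrix_matrix_mult_def vec_eq_iff mult.commute)

lemma conj_transpose_add: "conj_transpose (A + B) = conj_transpose A + conj_transpose B"
  by (simp add: conj_transpose_def vec_eq_iff)

lemma conj_transpose_diff: "conj_transpose (A - B) = conj_transpose A - conj_transpose B"
  by (simp add: conj_transpose_def vec_eq_iff)

lemma conj_transpose_mat: "conj_transpose (mat c) = mat (cnj c)"
  by (simp add: conj_transpose_def mat_def vec_eq_iff)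

lemma conj_transpose_cmat: "conj_transpose (cmat A) = cmat (transpose A)"
  by (simp add: conj_transpose_def cmat_def transpose_def vec_eq_iff)

lemma imaginary_shift_adjoint_J_form:
  fixes N J P :: "real^'n^'n"
  assumes "N ** J + J ** transpose N = P"
  shows "(mat (\<i> * complex_of_real \<omega>) + cmat N) ** cmat J
       + cmat J ** conj_transpose (mat (\<i> * complex_of_real \<omega>) + cmat N) = cmat P"
proof -
  have "mat (\<i> * complex_of_real \<omega>) ** cmat J + cmat J ** mat (cnj (\<i> * complex_of_real \<omega>)) = 0"
    by (simp add: matrix_mul_mat_left matrix_mul_mat_right vec_eq_iff)
  then show ?thesis
    by (simp add: assms[symmetric] conj_transpose_add conj_transpose_mat conj_transpose_cmat
        matrix_add_ldistrib matrix_add_rdistrib cmat_add cmat_mult algebra_simps)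
qed

theorem mainTheorem2:
  fixes \<gamma> :: "'n::finite \<Rightarrow> real"
    and G F :: "complex^'n^'n"
  assumes gpos: "\<And>i. \<gamma> i > 0"
    and herm: "hermitian_mat G"
    and symm: "transpose F = F"
    and inv: "\<And>\<omega>::real. invertible (mat (\<i> * complex_of_real \<omega>) + cmat (Gamma_mat \<gamma>) - cmat (M_mat G F))"
  shows "transpose (J_mat ** M_mat G F) = J_mat ** M_mat G F
       \<and> transpose (J_mat ** Gamma_mat \<gamma>) = - (J_mat ** Gamma_mat \<gamma>)
       \<and> (\<forall>\<omega>::real. S_mat \<gamma> G F \<omega> ** cmat J_mat ** conj_transpose (S_mat \<gamma> G F \<omega>) = cmat J_mat)"
proof (intro conjI allI)
  show "transpose (J_mat ** M_mat G F) = J_mat ** M_mat G F"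
    using herm symm by (rule J_mat_M_mat_symmetric)
  show "transpose (J_mat ** Gamma_mat \<gamma>) = - (J_mat ** Gamma_mat \<gamma>)"
    by (rule J_mat_Gamma_mat_skew)
  fix \<omega> :: real
  define K where "K = mat (\<i> * complex_of_real \<omega>) + cmat (Gamma_mat \<gamma> - M_mat G F)"
  define R where "R = cmat (sqrt2Gamma_mat \<gamma>)"
  have "invertible K"
    using inv[of \<omega>] by (simp add: K_def cmat_diff add_diff_eq)
  then have inv_K: "matrix_inv K ** K = mat 1"
    by (rule matrix_inv_left)
  then have inv_K_adj: "conj_transpose K ** conj_transpose (matrix_inv K) = mat 1"
    by (metis conj_transpose_mult conj_transpose_mat complex_cnj_one)
  have RJ: "R ** cmat J_mat = cmat J_mat ** R"
    by (simp add: R_def flip: cmat_mult sqrt2Gamma_mat_commute_J_mat)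
  have KJ: "K ** cmat J_mat + cmat J_mat ** conj_transpose K = R ** R ** cmat J_mat"
    unfolding K_def R_def
    by (simp add: imaginary_shift_adjoint_J_form Gamma_minus_M_mat_J_mat_form less_imp_le
        gpos herm symm cmat_mult)
  have S: "S_mat \<gamma> G F \<omega> = R ** matrix_inv K ** R - mat 1"
    by (simp add: S_mat_def K_def R_def cmat_diff add_diff_eq)
  have S_adj: "conj_transpose (S_mat \<gamma> G F \<omega>) = R ** conj_transpose (matrix_inv K) ** R - mat 1"
    by (simp add: S R_def conj_transpose_diff conj_transpose_mult conj_transpose_mat
        conj_transpose_cmat matrix_mul_assoc sqrt2Gamma_mat_eq_diag_mat transpose_diag_mat)
  show "S_mat \<gamma> G F \<omega> ** cmat J_mat ** conj_transpose (S_mat \<gamma> G F \<omega>) = cmat J_mat"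
    unfolding S_adj unfolding S by (rule sandwiched_inverse_preserves_form[OF inv_K inv_K_adj RJ KJ])
qed

end
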